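(* Suppose the jobs are indexed so that $e_1\ge e_2\ge\dots\ge e_n$, where $e_j=w_j/p_j$. Let $\sigma$ be a proper schedule and $\sigma'$ the intermediate schedule obtained from $\sigma$ by an admissible swap at some step $j^*$ between machines $M_h$ and $M_i$. Then $\sum_j w_jC_j(\sigma')\le\sum_j w_jC_j(\sigma)$.
   Context: Jobs $J=\{1,\dots,n\}$, job $j$ with positive integer processing time $p_j$ and nonnegative integer weight $w_j$, are scheduled non-preemptively on $m$ identical machines $M_1,\dots,M_m$; $p_{\max}=\max_j p_j$, $P(X)=\sum_{j\in X}p_j$. A proper schedule $\sigma$ is a partition $J=J_1(\sigma)\cup\dots\cup J_m(\sigma)$, the jobs of $J_i(\sigma)$ processed on $M_i$ consecutively from time $0$ without idle time in increasing index order; $C_j(\sigma)$ is the completion time of $j$. $J_j=\{1,\dots,j\}$, $J_{i,j}(\sigma)=J_i(\sigma)\cap J_j$, $\Delta_{h,i,j}(\sigma)=P(J_{h,j}(\sigma))-P(J_{i,j}(\sigma))$. The swap: admissible for proper $\sigma$ at step $j^*$ with machines $M_h,M_i$ if $j^*\in J_h(\sigma)$, $|J_i(\sigma)\setminus J_{i,j^*}(\sigma)|\ge 2p_{\max}$, and $\Delta_{h,i,j^*}(\sigma)\ge 4p_{\max}^2$. Let $J_I$ be the first (smallest-index) $2p_{\max}$ jobs of $J_i(\sigma)\setminus J_{i,j^*}(\sigma)$ and $J_H$ the last (largest-index) $2p_{\max}$ jobs of $J_{h,j^*}(\sigma)$; choose non-empty $J_{H'}\subseteq J_H$, $J_{I'}\subseteq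 J_I$ with $P(J_{H'})=P(J_{I'})$. The intermediate schedule $\sigma'$: on $M_h$ the time interval occupied by $J_H$ in $\sigma$ is filled by $J_H\setminus J_{H'}$ then $J_{I'}$; on $M_i$ the interval occupied by $J_I$ is filled by $J_{H'}$ then $J_I\setminus J_{I'}$ (each group in its order in $\sigma$); all other jobs keep their positions. *)

theory Defs
  imports Complex_Main
begin

text \<open>Jobs are 1..n, machines 1..m. A proper schedule is given by the machine
assignment sigma; jobs on each machine run in increasing index order from time 0.
A (general) schedule is given by a job sequence per machine.\<close>

definition proper :: "nat \<Rightarrow> nat \<Rightarrow> (nat \<Rightarrow> nat) \<Rightarrow> bool" where
  "proper n m \<sigma> \<longleftrightarrow> (\<forall>j\<in>{1..n}. \<sigma> j \<in> {1..m})"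

definition Jm :: "nat \<Rightarrow> (nat \<Rightarrow> nat) \<Rightarrow> nat \<Rightarrow> nat set" where
  "Jm n \<sigma> i = {j \<in> {1..n}. \<sigma> j = i}"

definition Jpre :: "nat \<Rightarrow> (nat \<Rightarrow> nat) \<Rightarrow> nat \<Rightarrow> nat \<Rightarrow> nat set" where
  "Jpre n \<sigma> i j = Jm n \<sigma> i \<inter> {1..j}"

definition PP :: "(nat \<Rightarrow> nat) \<Rightarrow> nat set \<Rightarrow> nat" where
  "PP p X = (\<Sum>x\<in>X. p x)"

definition pmax :: "nat \<Rightarrow> (nat \<Rightarrow> nat) \<Rightarrow> nat" where
  "pmax n p = Max (p ` {1..n})"

definition ctime :: "(nat \<Rightarrow> nat) \<Rightarrow> nat list \<Rightarrow> nat \<Rightarrow> nat" where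
  "ctime p L j = sum_list (map p (takeWhile (\<lambda>x. x \<noteq> j) L)) + p j"

definition twct :: "nat \<Rightarrow> (nat \<Rightarrow> nat) \<Rightarrow> (nat \<Rightarrow> nat) \<Rightarrow> (nat \<Rightarrow> nat list) \<Rightarrow> nat" where
  "twct m p w S = (\<Sum>l\<in>{1..m}. \<Sum>j\<in>set (S l). w j * ctime p (S l) j)"

definition proper_seq :: "nat \<Rightarrow> (nat \<Rightarrow> nat) \<Rightarrow> nat \<Rightarrow> nat list" where
  "proper_seq n \<sigma> l = sorted_list_of_set (Jm n \<sigma> l)"

definition JI :: "nat \<Rightarrow> (nat \<Rightarrow> nat) \<Rightarrow> (nat \<Rightarrow> nat) \<Rightarrow> nat \<Rightarrow> nat \<Rightarrow> nat set" where
  "JI n p \<sigma> i js = set (take (2 * pmax n p) (sorted_list_of_set (Jm n \<sigma> i - Jpre n \<sigma> i js)))"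

definition JH :: "nat \<Rightarrow> (nat \<Rightarrow> nat) \<Rightarrow> (nat \<Rightarrow> nat) \<Rightarrow> nat \<Rightarrow> nat \<Rightarrow> nat set" where
  "JH n p \<sigma> h js = (let L = sorted_list_of_set (Jpre n \<sigma> h js)
                      in set (drop (length L - 2 * pmax n p) L))"

definition admissible :: "nat \<Rightarrow> nat \<Rightarrow> (nat \<Rightarrow> nat) \<Rightarrow> (nat \<Rightarrow> nat) \<Rightarrow> nat \<Rightarrow> nat \<Rightarrow> nat \<Rightarrow> bool" where
  "admissible n m p \<sigma> js h i \<longleftrightarrow>
     h \<in> {1..m} \<and> i \<in> {1..m} \<and> js \<in> {1..n} \<and> js \<in> Jm n \<sigma> h \<and>
     card (Jm n \<sigma> i - Jpre n \<sigma> i js) \<ge> 2 * pmax n p \<and>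
     int (PP p (Jpre n \<sigma> h js)) - int (PP p (Jpre n \<sigma> i js)) \<ge> 4 * int (pmax n p) ^ 2"

definition swap_seq :: "nat \<Rightarrow> (nat \<Rightarrow> nat) \<Rightarrow> (nat \<Rightarrow> nat) \<Rightarrow> nat \<Rightarrow> nat \<Rightarrow> nat \<Rightarrow> nat set \<Rightarrow> nat set \<Rightarrow> nat \<Rightarrow> nat list" where
  "swap_seq n p \<sigma> js h i H' I' l =
     (if l = h then
        sorted_list_of_set (Jpre n \<sigma> h js - JH n p \<sigma> h js)
        @ sorted_list_of_set (JH n p \<sigma> h js - H')
        @ sorted_list_of_set I'
        @ sorted_list_of_set (Jm n \<sigma> h - Jpre n \<sigma> h js)
      else if l = i then
        sorted_list_of_set (Jpre n \<sigma> i js)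
        @ sorted_list_of_set H'
        @ sorted_list_of_set (JI n p \<sigma> i js - I')
        @ sorted_list_of_set (Jm n \<sigma> i - Jpre n \<sigma> i js - JI n p \<sigma> i js)
      else proper_seq n \<sigma> l)"

end

theory Submission
  imports Defs
begin

text \<open>Put \<open>\<rho> = w\<^sub>j\<^sub>* / p\<^sub>j\<^sub>*\<close>. Every job \<open>j \<le> j*\<close> has ratio at least \<open>\<rho>\<close> and does not finish
later in \<open>\<sigma>'\<close>, every job \<open>j > j*\<close> has ratio at most \<open>\<rho>\<close> and does not finish earlier. The swap
keeps all machine loads, and \<open>2 \<Sum> p\<^sub>j C\<^sub>j\<close> equals the sum of the squared loads plus \<open>\<Sum> p\<^sub>j\<^sup>2\<close>,
so \<open>\<Sum> p\<^sub>j C\<^sub>j\<close> is unchanged and \<open>\<Sum> w\<^sub>j (C'\<^sub>j - C\<^sub>j) \<le> \<rho> \<Sum> p\<^sub>j (C'\<^sub>j - C\<^sub>j) = 0\<close>.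
The comparison of completion times rests on \<open>\<Delta> \<ge> 4 p\<^sub>m\<^sub>a\<^sub>x\<^sup>2\<close> while \<open>J\<^sub>H\<close> and \<open>J\<^sub>I\<close> have total
length at most \<open>2 p\<^sub>m\<^sub>a\<^sub>x\<^sup>2\<close> each: \<open>H'\<close> then ends on \<open>M\<^sub>i\<close> before \<open>J\<^sub>H\<close> started on \<open>M\<^sub>h\<close>, and
\<open>I'\<close> starts on \<open>M\<^sub>h\<close> after \<open>J\<^sub>I\<close> ended on \<open>M\<^sub>i\<close>.\<close>

lemma PP_mono: "finite B \<Longrightarrow> A \<subseteq> B \<Longrightarrow> PP p A \<le> PP p B"
  by (simp add: PP_def sum_mono2)

lemma PP_union_le: "finite A \<Longrightarrow> finite B \<Longrightarrow> PP p (A \<union> B) \<le> PP p A + PP p B"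
  by (simp add: PP_def sum_Un_nat)

lemma PP_union_disjoint:
  "finite A \<Longrightarrow> finite B \<Longrightarrow> A \<inter> B = {} \<Longrightarrow> PP p (A \<union> B) = PP p A + PP p B"
  by (simp add: PP_def sum.union_disjoint)

lemma PP_le_card_mult:
  assumes "\<And>x. x \<in> X \<Longrightarrow> p x \<le> c"
  shows "PP p X \<le> card X * c"
  using sum_bounded_above[of X p c, OF assms] by (simp add: PP_def)

lemma PP_subset_diff: "finite B \<Longrightarrow> A \<subseteq> B \<Longrightarrow> PP p B = PP p (B - A) + PP p A"
  by (simp add: PP_def sum.subset_diff)

lemma sum_list_map_sorted_list_of_set:
  "finite X \<Longrightarrow> sum_list (map p (sorted_list_of_set X)) = PP p X"
  by (simp add: PP_def sum_list_distinct_conv_sum_set)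

lemma strict_sorted_take_less_drop:
  assumes "sorted_wrt (<) L" "a \<in> set (take d L)" "b \<in> set (drop d L)"
  shows "a < (b::nat)"
  using assms sorted_wrt_append[of "(<)" "take d L" "drop d L"] by simp

lemma set_take_union_drop: "set L = set (take d L) \<union> set (drop d L)"
  by (metis append_take_drop_id set_append)

lemma set_takeWhile_neq_strict_sorted:
  "sorted_wrt (<) L \<Longrightarrow> j \<in> set L \<Longrightarrow> set (takeWhile (\<lambda>x. x \<noteq> j) L) = {x \<in> set L. x < (j::nat)}"
  by (induction L) auto

lemma ctime_sorted_list_of_set:
  assumes "finite X" "j \<in> X"
  shows "ctime p (sorted_list_of_set X) j = PP p {x \<in> X. x < j} + p j"
proof -
  have "distinct (takeWhile (\<lambda>x. x \<noteq> j) (sorted_list_of_set X))"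
    by (simp add: distinct_takeWhile)
  then show ?thesis
    using set_takeWhile_neq_strict_sorted[of "sorted_list_of_set X" j] assms
    by (simp add: ctime_def PP_def sum_list_distinct_conv_sum_set strict_sorted_list_of_set)
qed

lemma ctime_append_left: "j \<in> set L\<^sub>1 \<Longrightarrow> ctime p (L\<^sub>1 @ L\<^sub>2) j = ctime p L\<^sub>1 j"
  by (simp add: ctime_def)

lemma ctime_append_right:
  "j \<notin> set L\<^sub>1 \<Longrightarrow> ctime p (L\<^sub>1 @ L\<^sub>2) j = sum_list (map p L\<^sub>1) + ctime p L\<^sub>2 j"
proof -
  assume "j \<notin> set L\<^sub>1"
  then have "takeWhile (\<lambda>x. x \<noteq> j) (L\<^sub>1 @ L\<^sub>2) = L\<^sub>1 @ takeWhile (\<lambda>x. x \<noteq> j) L\<^sub>2"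
    by (intro takeWhile_append2) auto
  then show ?thesis by (simp add: ctime_def)
qed

lemma ctime_sorted_append_in:
  "finite X \<Longrightarrow> j \<in> X \<Longrightarrow> ctime p (sorted_list_of_set X @ L) j = PP p {x \<in> X. x < j} + p j"
  by (simp add: ctime_append_left ctime_sorted_list_of_set)

lemma ctime_sorted_append_notin:
  "finite X \<Longrightarrow> j \<notin> X \<Longrightarrow> ctime p (sorted_list_of_set X @ L) j = PP p X + ctime p L j"
  by (simp add: ctime_append_right sum_list_map_sorted_list_of_set)

lemma two_sum_weighted_ctime:
  "distinct L \<Longrightarrow>
    2 * (\<Sum>j\<in>set L. p j * ctime p L j) = (sum_list (map p L))\<^sup>2 + (\<Sum>j\<in>set L. (p j)\<^sup>2)"
proof (induction L)
  case Nil
  then show ?case by simp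
next
  case (Cons a L)
  have "ctime p (a # L) j = p a + ctime p L j" if "j \<in> set L" for j
    using that Cons.prems by (auto simp: ctime_def)
  then have "(\<Sum>j\<in>set L. p j * ctime p (a # L) j) = p a * sum_list (map p L) + (\<Sum>j\<in>set L. p j * ctime p L j)"
    using Cons.prems
    by (simp add: algebra_simps sum.distrib sum_distrib_left sum_list_distinct_conv_sum_set)
  moreover have "ctime p (a # L) a = p a"
    by (simp add: ctime_def)
  ultimately show ?case
    using Cons by (simp add: power2_eq_square algebra_simps)
qed

definition realizes :: "nat \<Rightarrow> nat \<Rightarrow> (nat \<Rightarrow> nat) \<Rightarrow> (nat \<Rightarrow> nat list) \<Rightarrow> bool" where
  "realizes n m g S \<longleftrightarrow> (\<forall>j\<in>{1..n}. g j \<in> {1..m}) \<and>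
     (\<forall>l\<in>{1..m}. distinct (S l) \<and> set (S l) = {j \<in> {1..n}. g j = l})"

lemma sum_machines_eq_sum_jobs:
  assumes "realizes n m g S"
  shows "(\<Sum>l\<in>{1..m}. \<Sum>j\<in>set (S l). f l j) = (\<Sum>j\<in>{1..n}. f (g j) j)"
proof -
  have "(\<Sum>l\<in>{1..m}. \<Sum>j\<in>set (S l). f l j) = (\<Sum>l\<in>{1..m}. \<Sum>j\<in>{1..n}. if g j = l then f l j else 0)"
  proof (rule sum.cong[OF refl])
    fix l assume "l \<in> {1..m}"
    then have "set (S l) = {j \<in> {1..n}. g j = l}"
      using assms by (simp add: realizes_def)
    then show "(\<Sum>j\<in>set (S l). f l j) = (\<Sum>j\<in>{1..n}. if g j = l then f l j else 0)"
      by (simp only: sum.inter_filter[OF finite_atLeastAtMost])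
  qed
  also have "\<dots> = (\<Sum>j\<in>{1..n}. \<Sum>l\<in>{1..m}. if g j = l then f l j else 0)"
    by (rule sum.swap)
  also have "\<dots> = (\<Sum>j\<in>{1..n}. f (g j) j)"
    using assms by (intro sum.cong refl) (simp add: realizes_def sum.delta' eq_commute[of "g _"] if_distrib cong: if_cong)
  finally show ?thesis .
qed

lemma twct_eq_sum_jobs:
  "realizes n m g S \<Longrightarrow> twct m p w S = (\<Sum>j\<in>{1..n}. w j * ctime p (S (g j)) j)"
  unfolding twct_def by (rule sum_machines_eq_sum_jobs)

lemma two_sum_p_ctime_eq_squared_loads:
  assumes "realizes n m g S"
  shows "2 * (\<Sum>j\<in>{1..n}. p j * ctime p (S (g j)) j)
    = (\<Sum>l\<in>{1..m}. (sum_list (map p (S l)))\<^sup>2) + (\<Sum>j\<in>{1..n}. (p j)\<^sup>2)"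
proof -
  have "2 * (\<Sum>j\<in>{1..n}. p j * ctime p (S (g j)) j) = 2 * (\<Sum>l\<in>{1..m}. \<Sum>j\<in>set (S l). p j * ctime p (S l) j)"
    by (simp only: sum_machines_eq_sum_jobs[OF assms])
  also have "\<dots> = (\<Sum>l\<in>{1..m}. 2 * (\<Sum>j\<in>set (S l). p j * ctime p (S l) j))"
    by (simp add: sum_distrib_left)
  also have "\<dots> = (\<Sum>l\<in>{1..m}. (sum_list (map p (S l)))\<^sup>2 + (\<Sum>j\<in>set (S l). (p j)\<^sup>2))"
    using assms by (intro sum.cong refl two_sum_weighted_ctime) (simp add: realizes_def)
  also have "\<dots> = (\<Sum>l\<in>{1..m}. (sum_list (map p (S l)))\<^sup>2) + (\<Sum>j\<in>{1..n}. (p j)\<^sup>2)"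
    using sum_machines_eq_sum_jobs[OF assms, of "\<lambda>l j. (p j)\<^sup>2"] by (simp add: sum.distrib)
  finally show ?thesis .
qed

corollary sum_p_ctime_eq_of_equal_loads:
  assumes "realizes n m g S" "realizes n m g' S'"
    and "\<And>l. l \<in> {1..m} \<Longrightarrow> sum_list (map p (S' l)) = sum_list (map p (S l))"
  shows "(\<Sum>j\<in>{1..n}. p j * ctime p (S' (g' j)) j) = (\<Sum>j\<in>{1..n}. p j * ctime p (S (g j)) j)"
  using two_sum_p_ctime_eq_squared_loads[OF assms(1), of p]
    two_sum_p_ctime_eq_squared_loads[OF assms(2), of p] assms(3)
  by simp

lemma proper_realizes: "proper n m \<sigma> \<Longrightarrow> realizes n m \<sigma> (proper_seq n \<sigma>)"
  by (simp add: realizes_def proper_def proper_seq_def Jm_def)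

lemma weighted_sum_le_of_ratio_threshold:
  fixes p w C C' :: "nat \<Rightarrow> nat" and \<rho> :: real
  assumes ppos: "\<And>j. j \<in> J \<Longrightarrow> p j > 0"
    and threshold: "\<And>j. j \<in> J \<Longrightarrow>
      (\<rho> \<le> real (w j) / real (p j) \<and> C' j \<le> C j) \<or> (real (w j) / real (p j) \<le> \<rho> \<and> C j \<le> C' j)"
    and same: "(\<Sum>j\<in>J. p j * C' j) = (\<Sum>j\<in>J. p j * C j)"
  shows "(\<Sum>j\<in>J. w j * C' j) \<le> (\<Sum>j\<in>J. w j * C j)"
proof -
  define d where "d j = real (C' j) - real (C j)" for j
  have each: "real (w j) * d j \<le> \<rho> * (real (p j) * d j)" if "j \<in> J" for j
  proof -
    have "real (w j) * d j - \<rho> * (real (p j) * d j) = (real (w j) / real (p j) - \<rho>) * (real (p j) * d j)"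
      using ppos[OF that] by (simp add: field_simps)
    also have "\<dots> \<le> 0"
      using threshold[OF that]
    proof
      assume "\<rho> \<le> real (w j) / real (p j) \<and> C' j \<le> C j"
      then show ?thesis by (auto simp: d_def intro!: mult_nonneg_nonpos)
    next
      assume "real (w j) / real (p j) \<le> \<rho> \<and> C j \<le> C' j"
      then show ?thesis by (auto simp: d_def intro!: mult_nonpos_nonneg)
    qed
    finally show ?thesis by simp
  qed
  have "real (\<Sum>j\<in>J. w j * C' j) - real (\<Sum>j\<in>J. w j * C j) = (\<Sum>j\<in>J. real (w j) * d j)"
    by (simp add: d_def sum_subtractf right_diff_distrib)
  also have "\<dots> \<le> (\<Sum>j\<in>J. \<rho> * (real (p j) * d j))"
    using each by (rule sum_mono)
  also have "\<dots> = \<rho> * (real (\<Sum>j\<in>J. p j * C' j) - real (\<Sum>j\<in>J. p j * C j))"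
    by (simp add: d_def sum_distrib_left sum_subtractf right_diff_distrib)
  also have "\<dots> = 0"
    using same by simp
  finally have "real (\<Sum>j\<in>J. w j * C' j) \<le> real (\<Sum>j\<in>J. w j * C j)"
    by linarith
  then show ?thesis
    by (simp only: of_nat_le_iff)
qed

lemma finite_Jm [simp]: "finite (Jm n \<sigma> l)"
  by (simp add: Jm_def)

lemma finite_Jpre [simp]: "finite (Jpre n \<sigma> l j)"
  by (simp add: Jpre_def)

lemma Jpre_subset_Jm: "Jpre n \<sigma> l j \<subseteq> Jm n \<sigma> l"
  by (simp add: Jpre_def)

definition swap_assign :: "(nat \<Rightarrow> nat) \<Rightarrow> nat \<Rightarrow> nat \<Rightarrow> nat set \<Rightarrow> nat set \<Rightarrow> nat \<Rightarrow> nat" where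
  "swap_assign \<sigma> h i H' I' j = (if j \<in> H' then i else if j \<in> I' then h else \<sigma> j)"

locale admissible_swap =
  fixes n m :: nat and p :: "nat \<Rightarrow> nat" and \<sigma> :: "nat \<Rightarrow> nat"
    and js h i :: nat and H' I' :: "nat set"
  assumes ppos: "\<forall>j\<in>{1..n}. p j > 0"
    and proper_sched: "proper n m \<sigma>"
    and adm: "admissible n m p \<sigma> js h i"
    and Hsub: "H' \<subseteq> JH n p \<sigma> h js"
    and Isub: "I' \<subseteq> JI n p \<sigma> i js"
    and eqP: "PP p H' = PP p I'"
begin

abbreviation "pm \<equiv> pmax n p"
abbreviation "Jh \<equiv> Jm n \<sigma> h"
abbreviation "Ji \<equiv> Jm n \<sigma> i"
abbreviation "Jh_js \<equiv> Jpre n \<sigma> h js"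
abbreviation "Ji_js \<equiv> Jpre n \<sigma> i js"
abbreviation "block_H \<equiv> JH n p \<sigma> h js"
abbreviation "block_I \<equiv> JI n p \<sigma> i js"
abbreviation "head_h \<equiv> Jh_js - block_H"
abbreviation "tail_h \<equiv> Jh - Jh_js"
abbreviation "tail_i \<equiv> Ji - Ji_js - block_I"
abbreviation "S' \<equiv> swap_seq n p \<sigma> js h i H' I'"
abbreviation "g \<equiv> swap_assign \<sigma> h i H' I'"
abbreviation "C j \<equiv> ctime p (proper_seq n \<sigma> (\<sigma> j)) j"
abbreviation "C' j \<equiv> ctime p (S' (g j)) j"

lemma js_range: "js \<in> {1..n}" and h_range: "h \<in> {1..m}" and i_range: "i \<in> {1..m}"
  using adm by (simp_all add: admissible_def)

lemma load_gap: "PP p Ji_js + 4 * pm\<^sup>2 \<le> PP p Jh_js"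
proof -
  have "int (PP p Ji_js + 4 * pm\<^sup>2) \<le> int (PP p Jh_js)"
    using adm by (simp add: admissible_def)
  then show ?thesis by (simp only: of_nat_le_iff)
qed

lemma p_le_pm: "j \<in> {1..n} \<Longrightarrow> p j \<le> pm"
  by (simp add: pmax_def)

lemma machines_distinct: "h \<noteq> i"
proof
  assume "h = i"
  then have "4 * pm\<^sup>2 = 0"
    using load_gap by simp
  moreover have "0 < p js"
    using ppos js_range by blast
  then have "0 < pm"
    using p_le_pm[OF js_range] by linarith
  ultimately show False by simp
qed

lemma Jh_Ji_disjoint: "Jh \<inter> Ji = {}"
  using machines_distinct by (auto simp: Jm_def)

lemma block_H_eq: "block_H = set (drop (card Jh_js - 2 * pm) (sorted_list_of_set Jh_js))"
  by (simp add: JH_def Let_def)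

lemma block_I_eq: "block_I = set (take (2 * pm) (sorted_list_of_set (Ji - Ji_js)))"
  by (simp add: JI_def)

lemma block_H_subset: "block_H \<subseteq> Jh_js"
  using block_H_eq set_drop_subset by fastforce

lemma block_I_subset: "block_I \<subseteq> Ji - Ji_js"
  using block_I_eq set_take_subset by fastforce

lemma head_h_less_block_H:
  assumes "a \<in> head_h" "b \<in> block_H"
  shows "a < b"
proof -
  let ?L = "sorted_list_of_set Jh_js" and ?d = "card Jh_js - 2 * pm"
  have "a \<in> set (take ?d ?L)"
    using assms(1) set_take_union_drop[of ?L ?d] by (auto simp: block_H_eq)
  then show ?thesis
    using assms(2) strict_sorted_take_less_drop[of ?L] by (simp add: block_H_eq strict_sorted_list_of_set)
qed

lemma block_I_less_tail_i:
  assumes "a \<in> block_I" "b \<in> tail_i"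
  shows "a < b"
proof -
  let ?L = "sorted_list_of_set (Ji - Ji_js)"
  have "b \<in> set (drop (2 * pm) ?L)"
    using assms(2) set_take_union_drop[of ?L "2 * pm"] by (auto simp: block_I_eq)
  then show ?thesis
    using assms(1) strict_sorted_take_less_drop[of ?L] by (simp add: block_I_eq strict_sorted_list_of_set)
qed

lemma finite_block_H [simp]: "finite block_H"
  using block_H_subset by (rule finite_subset) simp

lemma finite_block_I [simp]: "finite block_I"
  using block_I_subset by (rule finite_subset) simp

lemma finite_H' [simp]: "finite H'"
  using Hsub by (rule finite_subset) simp

lemma finite_I' [simp]: "finite I'"
  using Isub by (rule finite_subset) simp

lemma p_le_pm_on_Jm: "j \<in> Jm n \<sigma> l \<Longrightarrow> p j \<le> pm"
  by (simp add: Jm_def p_le_pm)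

lemma PP_block_H_le: "PP p block_H \<le> 2 * pm\<^sup>2"
proof -
  have "card block_H \<le> length (drop (card Jh_js - 2 * pm) (sorted_list_of_set Jh_js))"
    unfolding block_H_eq by (rule card_length)
  then have card: "card block_H \<le> 2 * pm"
    by simp
  have "PP p block_H \<le> card block_H * pm"
    using block_H_subset by (intro PP_le_card_mult p_le_pm_on_Jm) (auto simp: Jpre_def)
  also have "\<dots> \<le> 2 * pm * pm"
    using card by simp
  finally show ?thesis
    by (simp add: power2_eq_square)
qed

lemma PP_block_I_le: "PP p block_I \<le> 2 * pm\<^sup>2"
proof -
  have "card block_I \<le> length (take (2 * pm) (sorted_list_of_set (Ji - Ji_js)))"
    unfolding block_I_eq by (rule card_length)
  then have card: "card block_I \<le> 2 * pm"
    by simp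
  have "PP p block_I \<le> card block_I * pm"
    using block_I_subset by (intro PP_le_card_mult p_le_pm_on_Jm) auto
  also have "\<dots> \<le> 2 * pm * pm"
    using card by simp
  finally show ?thesis
    by (simp add: power2_eq_square)
qed

lemma H'_ends_before_block_H: "PP p Ji_js + PP p H' + PP p block_H \<le> PP p Jh_js"
  using load_gap PP_block_H_le PP_mono[OF finite_block_H Hsub, of p] by linarith

lemma I'_starts_after_block_I: "PP p Ji_js + PP p block_I + PP p I' \<le> PP p Jh_js"
  using load_gap PP_block_H_le PP_block_I_le PP_mono[OF finite_block_H Hsub, of p] eqP by linarith

lemma H'_subset_Jh: "H' \<subseteq> Jh"
  using Hsub block_H_subset by (auto simp: Jpre_def)

lemma I'_subset_Ji: "I' \<subseteq> Ji"
  using Isub block_I_subset by auto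

lemma PP_Jh_js_split: "PP p Jh_js = PP p head_h + PP p block_H"
  using PP_subset_diff[OF finite_Jpre block_H_subset] by simp

lemma PP_block_H_split: "PP p block_H = PP p (block_H - H') + PP p H'"
  using PP_subset_diff[OF finite_block_H Hsub] by simp

lemma PP_Jh_split: "PP p Jh = PP p Jh_js + PP p tail_h"
  using PP_subset_diff[of Jh Jh_js] by (simp add: Jpre_def)

lemma PP_block_I_split: "PP p block_I = PP p I' + PP p (block_I - I')"
  using PP_subset_diff[OF finite_block_I Isub] by simp

lemma PP_Ji_split: "PP p Ji = PP p Ji_js + PP p block_I + PP p tail_i"
  using PP_subset_diff[of Ji Ji_js] PP_subset_diff[OF _ block_I_subset] by (simp add: Jpre_def)

lemma swap_seq_h:
  "S' h = sorted_list_of_set head_h @ sorted_list_of_set (block_H - H') @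
    sorted_list_of_set I' @ sorted_list_of_set tail_h"
  by (simp add: swap_seq_def)

lemma swap_seq_i:
  "S' i = sorted_list_of_set Ji_js @ sorted_list_of_set H' @
    sorted_list_of_set (block_I - I') @ sorted_list_of_set tail_i"
  using machines_distinct by (simp add: swap_seq_def)

lemma swap_seq_other: "l \<noteq> h \<Longrightarrow> l \<noteq> i \<Longrightarrow> S' l = proper_seq n \<sigma> l"
  by (simp add: swap_seq_def)

lemma swap_assign_H': "j \<in> H' \<Longrightarrow> g j = i"
  by (simp add: swap_assign_def)

lemma swap_assign_I': "j \<in> I' \<Longrightarrow> g j = h"
  using H'_subset_Jh I'_subset_Ji Jh_Ji_disjoint by (auto simp: swap_assign_def)

lemma swap_assign_other: "j \<notin> H' \<Longrightarrow> j \<notin> I' \<Longrightarrow> g j = \<sigma> j"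
  by (simp add: swap_assign_def)

lemma C_of_Jh: "j \<in> Jh \<Longrightarrow> C j = PP p {x \<in> Jh. x < j} + p j"
  by (simp add: Jm_def proper_seq_def ctime_sorted_list_of_set)

lemma C_of_Ji: "j \<in> Ji \<Longrightarrow> C j = PP p {x \<in> Ji. x < j} + p j"
  by (simp add: Jm_def proper_seq_def ctime_sorted_list_of_set)

lemma ctime_head_h:
  assumes "j \<in> head_h"
  shows "C' j \<le> C j"
proof -
  have j: "j \<in> Jh" "\<sigma> j = h" "j \<notin> H'" "j \<notin> I'"
    using assms Hsub I'_subset_Ji Jh_Ji_disjoint by (auto simp: Jpre_def Jm_def)
  then have "C' j = PP p {x \<in> head_h. x < j} + p j"
    using assms by (simp add: swap_assign_other swap_seq_h ctime_sorted_append_in)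
  also have "\<dots> \<le> PP p {x \<in> Jh. x < j} + p j"
    by (intro add_right_mono PP_mono) (auto simp: Jpre_def)
  also have "\<dots> = C j"
    by (rule C_of_Jh[OF j(1), symmetric])
  finally show ?thesis .
qed

lemma ctime_block_H_rest:
  assumes "j \<in> block_H - H'"
  shows "C' j \<le> C j"
proof -
  have j: "j \<in> Jh" "\<sigma> j = h" "j \<notin> I'" "j \<notin> head_h"
    using assms block_H_subset I'_subset_Ji Jh_Ji_disjoint by (auto simp: Jpre_def Jm_def)
  then have "C' j = PP p head_h + PP p {x \<in> block_H - H'. x < j} + p j"
    using assms by (simp add: swap_assign_other swap_seq_h ctime_sorted_append_in ctime_sorted_append_notin)
  also have "\<dots> = PP p (head_h \<union> {x \<in> block_H - H'. x < j}) + p j"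
    by (simp add: PP_union_disjoint Int_def)
  also have "\<dots> \<le> PP p {x \<in> Jh. x < j} + p j"
    using assms head_h_less_block_H block_H_subset by (intro add_right_mono PP_mono) (auto simp: Jpre_def)
  also have "\<dots> = C j"
    by (rule C_of_Jh[OF j(1), symmetric])
  finally show ?thesis .
qed

lemma ctime_H':
  assumes "j \<in> H'"
  shows "C' j \<le> C j"
proof -
  have j: "j \<in> block_H" "j \<in> Jh" "j \<notin> Ji_js"
    using assms Hsub H'_subset_Jh Jh_Ji_disjoint by (auto simp: Jpre_def)
  then have "C' j = PP p Ji_js + PP p {x \<in> H'. x < j} + p j"
    using assms by (simp add: swap_assign_H' swap_seq_i ctime_sorted_append_in ctime_sorted_append_notin)
  moreover have "PP p {x \<in> H'. x < j} \<le> PP p H'"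
    by (rule PP_mono) auto
  moreover have "PP p head_h \<le> PP p {x \<in> Jh. x < j}"
    using j head_h_less_block_H by (intro PP_mono) (auto simp: Jpre_def)
  ultimately show ?thesis
    using C_of_Jh[OF j(2)] H'_ends_before_block_H PP_Jh_js_split by linarith
qed

lemma ctime_tail_h:
  assumes "j \<in> tail_h"
  shows "C j \<le> C' j"
proof -
  have j: "j \<in> Jh" "\<sigma> j = h" "j \<notin> H'" "j \<notin> I'" "j \<notin> head_h" "j \<notin> block_H - H'"
    using assms Hsub block_H_subset I'_subset_Ji Jh_Ji_disjoint by (auto simp: Jm_def)
  then have "C' j = PP p head_h + PP p (block_H - H') + PP p I' + PP p {x \<in> tail_h. x < j} + p j"
    using assms by (simp add: swap_assign_other swap_seq_h ctime_sorted_append_notin ctime_sorted_list_of_set)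
  moreover have "PP p {x \<in> Jh. x < j} \<le> PP p (Jh_js \<union> {x \<in> tail_h. x < j})"
    by (rule PP_mono) auto
  moreover have "PP p (Jh_js \<union> {x \<in> tail_h. x < j}) \<le> PP p Jh_js + PP p {x \<in> tail_h. x < j}"
    by (rule PP_union_le) auto
  ultimately show ?thesis
    using C_of_Jh[OF j(1)] PP_Jh_js_split PP_block_H_split eqP by linarith
qed

lemma ctime_Ji_js:
  assumes "j \<in> Ji_js"
  shows "C' j \<le> C j"
proof -
  have j: "j \<in> Ji" "\<sigma> j = i" "j \<notin> H'" "j \<notin> I'"
    using assms H'_subset_Jh Isub block_I_subset Jh_Ji_disjoint by (auto simp: Jpre_def Jm_def)
  then have "C' j = PP p {x \<in> Ji_js. x < j} + p j"
    using assms by (simp add: swap_assign_other swap_seq_i ctime_sorted_append_in)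
  also have "\<dots> \<le> PP p {x \<in> Ji. x < j} + p j"
    by (intro add_right_mono PP_mono) (auto simp: Jpre_def)
  also have "\<dots> = C j"
    by (rule C_of_Ji[OF j(1), symmetric])
  finally show ?thesis .
qed

lemma Ji_below_block_I: "j \<in> block_I \<Longrightarrow> {x \<in> Ji. x < j} \<subseteq> Ji_js \<union> {x \<in> block_I. x < j}"
  using block_I_less_tail_i by fastforce

lemma ctime_I':
  assumes "j \<in> I'"
  shows "C j \<le> C' j"
proof -
  have j: "j \<in> block_I" "j \<in> Ji" "j \<notin> head_h" "j \<notin> block_H - H'"
    using assms Isub I'_subset_Ji block_H_subset Jh_Ji_disjoint by (auto simp: Jpre_def)
  then have "C' j = PP p head_h + PP p (block_H - H') + PP p {x \<in> I'. x < j} + p j"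
    using assms by (simp add: swap_assign_I' swap_seq_h ctime_sorted_append_in ctime_sorted_append_notin)
  moreover have "PP p {x \<in> Ji. x < j} \<le> PP p (Ji_js \<union> block_I)"
    using Ji_below_block_I[OF j(1)] by (intro PP_mono) auto
  moreover have "PP p (Ji_js \<union> block_I) \<le> PP p Ji_js + PP p block_I"
    by (rule PP_union_le) auto
  ultimately show ?thesis
    using C_of_Ji[OF j(2)] I'_starts_after_block_I PP_Jh_js_split PP_block_H_split eqP by linarith
qed

lemma ctime_block_I_rest:
  assumes "j \<in> block_I - I'"
  shows "C j \<le> C' j"
proof -
  have j: "j \<in> Ji" "\<sigma> j = i" "j \<notin> H'" "j \<notin> Ji_js"
    using assms block_I_subset H'_subset_Jh Jh_Ji_disjoint by (auto simp: Jm_def)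
  then have "C' j = PP p Ji_js + PP p H' + PP p {x \<in> block_I - I'. x < j} + p j"
    using assms by (simp add: swap_assign_other swap_seq_i ctime_sorted_append_in ctime_sorted_append_notin)
  moreover have "PP p {x \<in> Ji. x < j} \<le> PP p (Ji_js \<union> {x \<in> block_I. x < j})"
    using assms Ji_below_block_I by (intro PP_mono) auto
  moreover have "PP p (Ji_js \<union> {x \<in> block_I. x < j}) \<le> PP p Ji_js + PP p {x \<in> block_I. x < j}"
    by (rule PP_union_le) auto
  moreover have "PP p {x \<in> block_I. x < j} \<le> PP p (I' \<union> {x \<in> block_I - I'. x < j})"
    by (rule PP_mono) auto
  moreover have "PP p (I' \<union> {x \<in> block_I - I'. x < j}) \<le> PP p I' + PP p {x \<in> block_I - I'. x < j}"
    by (rule PP_union_le) auto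
  ultimately show ?thesis
    using C_of_Ji[OF j(1)] eqP by linarith
qed

lemma ctime_tail_i:
  assumes "j \<in> tail_i"
  shows "C j \<le> C' j"
proof -
  have j: "j \<in> Ji" "\<sigma> j = i" "j \<notin> H'" "j \<notin> I'" "j \<notin> Ji_js" "j \<notin> block_I - I'"
    using assms H'_subset_Jh Isub Jh_Ji_disjoint by (auto simp: Jm_def)
  then have "C' j = PP p Ji_js + PP p H' + PP p (block_I - I') + PP p {x \<in> tail_i. x < j} + p j"
    using assms by (simp add: swap_assign_other swap_seq_i ctime_sorted_append_notin ctime_sorted_list_of_set)
  moreover have "PP p {x \<in> Ji. x < j} \<le> PP p ((Ji_js \<union> block_I) \<union> {x \<in> tail_i. x < j})"
    by (rule PP_mono) auto
  moreover have "PP p ((Ji_js \<union> block_I) \<union> {x \<in> tail_i. x < j})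
      \<le> PP p (Ji_js \<union> block_I) + PP p {x \<in> tail_i. x < j}"
    by (rule PP_union_le) auto
  moreover have "PP p (Ji_js \<union> block_I) \<le> PP p Ji_js + PP p block_I"
    by (rule PP_union_le) auto
  ultimately show ?thesis
    using C_of_Ji[OF j(1)] PP_block_I_split eqP by linarith
qed

lemma ctime_other_machine:
  assumes "\<sigma> j \<noteq> h" "\<sigma> j \<noteq> i"
  shows "C' j = C j"
proof -
  have "j \<notin> H'" "j \<notin> I'"
    using assms H'_subset_Jh I'_subset_Ji by (auto simp: Jm_def)
  then show ?thesis
    using assms by (simp add: swap_assign_other swap_seq_other)
qed

lemma ctime_swap_le_of_le_js:
  assumes "j \<in> {1..n}" "j \<le> js"
  shows "C' j \<le> C j"
proof -
  consider "\<sigma> j = h" | "\<sigma> j = i" | "\<sigma> j \<noteq> h" "\<sigma> j \<noteq> i"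
    by blast
  then show ?thesis
  proof cases
    case 1
    then have "j \<in> head_h \<or> j \<in> block_H - H' \<or> j \<in> H'"
      using assms by (auto simp: Jpre_def Jm_def)
    then show ?thesis
      using ctime_head_h ctime_block_H_rest ctime_H' by blast
  next
    case 2
    then have "j \<in> Ji_js"
      using assms by (simp add: Jpre_def Jm_def)
    then show ?thesis
      by (rule ctime_Ji_js)
  next
    case 3
    then show ?thesis
      by (simp add: ctime_other_machine)
  qed
qed

lemma ctime_swap_ge_of_gt_js:
  assumes "j \<in> {1..n}" "js < j"
  shows "C j \<le> C' j"
proof -
  consider "\<sigma> j = h" | "\<sigma> j = i" | "\<sigma> j \<noteq> h" "\<sigma> j \<noteq> i"
    by blast
  then show ?thesis
  proof cases
    case 1
    then have "j \<in> tail_h"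
      using assms by (simp add: Jpre_def Jm_def)
    then show ?thesis
      by (rule ctime_tail_h)
  next
    case 2
    then have "j \<in> I' \<or> j \<in> block_I - I' \<or> j \<in> tail_i"
      using assms by (auto simp: Jpre_def Jm_def)
    then show ?thesis
      using ctime_I' ctime_block_I_rest ctime_tail_i by blast
  next
    case 3
    then show ?thesis
      by (simp add: ctime_other_machine)
  qed
qed

lemma set_swap_seq_h: "set (S' h) = (Jh - H') \<union> I'"
  using Hsub block_H_subset by (auto simp: swap_seq_h Jpre_def)

lemma set_swap_seq_i: "set (S' i) = (Ji - I') \<union> H'"
  using Isub block_I_subset by (auto simp: swap_seq_i Jpre_def)

lemma distinct_swap_seq: "distinct (S' l)"
proof -
  have "distinct (S' h)"
    using I'_subset_Ji Jh_Ji_disjoint block_H_subset Jpre_subset_Jm[of n \<sigma> h js] by (auto simp: swap_seq_h)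
  moreover have "distinct (S' i)"
    using H'_subset_Jh Jh_Ji_disjoint Isub block_I_subset by (auto simp: swap_seq_i Jpre_def)
  ultimately show ?thesis
    by (cases "l = h \<or> l = i") (auto simp: swap_seq_other proper_seq_def)
qed

lemma swap_seq_realizes: "realizes n m g S'"
proof -
  have range: "g j \<in> {1..m}" if "j \<in> {1..n}" for j
    using that proper_sched h_range i_range by (simp add: swap_assign_def proper_def)
  have "set (S' l) = {j \<in> {1..n}. g j = l}" if "l \<in> {1..m}" for l
  proof -
    consider "l = h" | "l = i" | "l \<noteq> h" "l \<noteq> i"
      by blast
    then show ?thesis
    proof cases
      case 1
      then show ?thesis
        using set_swap_seq_h H'_subset_Jh I'_subset_Ji machines_distinct
        by (auto simp: swap_assign_def Jm_def)
    next
      case 2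
      then show ?thesis
        using set_swap_seq_i H'_subset_Jh I'_subset_Ji machines_distinct
        by (auto simp: swap_assign_def Jm_def)
    next
      case 3
      then show ?thesis
        using H'_subset_Jh I'_subset_Ji
        by (auto simp: swap_seq_other proper_seq_def swap_assign_def Jm_def)
    qed
  qed
  then show ?thesis
    using range distinct_swap_seq by (simp add: realizes_def)
qed

lemma swap_seq_load: "sum_list (map p (S' l)) = sum_list (map p (proper_seq n \<sigma> l))"
proof -
  have "sum_list (map p (S' h)) = PP p Jh"
    using PP_Jh_split PP_Jh_js_split PP_block_H_split eqP
    by (simp add: swap_seq_h sum_list_map_sorted_list_of_set)
  moreover have "sum_list (map p (S' i)) = PP p Ji"
    using PP_Ji_split PP_block_I_split eqP
    by (simp add: swap_seq_i sum_list_map_sorted_list_of_set)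
  ultimately show ?thesis
    by (cases "l = h \<or> l = i") (auto simp: swap_seq_other proper_seq_def sum_list_map_sorted_list_of_set)
qed

end

theorem lemma5:
  fixes n m :: nat and p w :: "nat \<Rightarrow> nat" and \<sigma> :: "nat \<Rightarrow> nat"
    and js h i :: nat and H' I' :: "nat set"
  assumes ppos: "\<forall>j\<in>{1..n}. p j > 0"
    and order: "\<forall>j\<in>{1..n}. \<forall>k\<in>{1..n}. j \<le> k \<longrightarrow> real (w j) / real (p j) \<ge> real (w k) / real (p k)"
    and proper_sched: "proper n m \<sigma>"
    and adm: "admissible n m p \<sigma> js h i"
    and Hsub: "H' \<subseteq> JH n p \<sigma> h js" and Hne: "H' \<noteq> {}"
    and Isub: "I' \<subseteq> JI n p \<sigma> i js" and Ine: "I' \<noteq> {}"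
    and eqP: "PP p H' = PP p I'"
  shows "twct m p w (swap_seq n p \<sigma> js h i H' I') \<le> twct m p w (proper_seq n \<sigma>)"
proof -
  interpret admissible_swap n m p \<sigma> js h i H' I'
    using ppos proper_sched adm Hsub Isub eqP by unfold_locales
  have "(\<Sum>j\<in>{1..n}. w j * C' j) \<le> (\<Sum>j\<in>{1..n}. w j * C j)"
  proof (rule weighted_sum_le_of_ratio_threshold[where \<rho> = "real (w js) / real (p js)"])
    fix j assume "j \<in> {1..n}"
    then show "(real (w js) / real (p js) \<le> real (w j) / real (p j) \<and> C' j \<le> C j) \<or>
        (real (w j) / real (p j) \<le> real (w js) / real (p js) \<and> C j \<le> C' j)"
      using order js_range ctime_swap_le_of_le_js ctime_swap_ge_of_gt_js by (meson not_le less_imp_le)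
  next
    show "(\<Sum>j\<in>{1..n}. p j * C' j) = (\<Sum>j\<in>{1..n}. p j * C j)"
      using proper_realizes[OF proper_sched] swap_seq_realizes swap_seq_load
      by (rule sum_p_ctime_eq_of_equal_loads)
  qed (use ppos in simp)
  then show ?thesis
    using twct_eq_sum_jobs[OF swap_seq_realizes] twct_eq_sum_jobs[OF proper_realizes[OF proper_sched]]
    by simp
qed

end
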